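(* Let $\mathcal{Z}=\{z_1,\dots,z_K\}$ with counting measure, $P$ a probability on $\mathcal{Z}$, and for a fixed noise level $\sigma$ let $q_{\sigma\mid0}(\cdot\mid z_0)$ be a Markov kernel on $\mathcal{Z}$ such that the corrupted marginal $P_\sigma(z)=\sum_{z_0}P(z_0)q_{\sigma\mid0}(z\mid z_0)$ satisfies $P_\sigma(z_i)>0$ for all $i$. Let $(\omega_{ij})$ be a symmetric Markov kernel: $\omega_{ij}=\omega_{ji}\ge0$, $\sum_j\omega_{ij}=1$, and write $\omega(\cdot\mid z_i)=(\omega_{ij})_j$. Define, for $g:\mathcal{Z}\to\mathbb{R}$, $$\mathcal{L}_\sigma(g)=\mathbb{E}_{z_0\sim P}\,\mathbb{E}_{z_\sigma\sim q_{\sigma\mid0}(\cdot\mid z_0)}\,\mathbb{E}_{\tilde z\sim\omega(\cdot\mid z_\sigma)}\left[\tanh\!\left(\frac{g(z_\sigma)-g(\tilde z)}{2}\right)-1\right]^2.$$ Then $\mathcal{L}_\sigma(g)=\sum_{i,j}P_\sigma(z_i)\omega_{ij}\left[\tanh\!\left(\frac{g(z_i)-g(z_j)}{2}\right)-1\right]^2$, and $g$ minimizes $\mathcal{L}_\sigma$ over all functions $\mathcal{Z}\to\mathbb{R}$ if and only if $g(z_i)-\log P_\sigma(z_i)$ is constant on each connected component of the graph on $\{1,\dots,K\}$ with edges $\{i,j\}$, $i\ne j$, for which $\omega_{ij}>0$. *)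

theory Defs
  imports Complex_Main
begin

text \<open>The finite space Z = {z_1,...,z_K} is identified with the index set {..<K}
  (counting measure); functions on Z are functions nat => real whose values
  outside {..<K} are irrelevant.\<close>

definition corrupted_marginal :: "nat \<Rightarrow> (nat \<Rightarrow> real) \<Rightarrow> (nat \<Rightarrow> nat \<Rightarrow> real) \<Rightarrow> nat \<Rightarrow> real" where
  "corrupted_marginal K P q z = (\<Sum>z0<K. P z0 * q z0 z)"

definition denoise_loss ::
  "nat \<Rightarrow> (nat \<Rightarrow> real) \<Rightarrow> (nat \<Rightarrow> nat \<Rightarrow> real) \<Rightarrow> (nat \<Rightarrow> nat \<Rightarrow> real) \<Rightarrow> (nat \<Rightarrow> real) \<Rightarrow> real" where
  "denoise_loss K P q \<omega> g =
     (\<Sum>z0<K. P z0 * (\<Sum>zs<K. q z0 zs * (\<Sum>zt<K. \<omega> zs zt * (tanh ((g zs - g zt) / 2) - 1)\<^sup>2)))"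

definition omega_edge :: "nat \<Rightarrow> (nat \<Rightarrow> nat \<Rightarrow> real) \<Rightarrow> nat \<Rightarrow> nat \<Rightarrow> bool" where
  "omega_edge K \<omega> i j \<longleftrightarrow> i < K \<and> j < K \<and> i \<noteq> j \<and> \<omega> i j > 0"

definition const_on_components :: "nat \<Rightarrow> (nat \<Rightarrow> nat \<Rightarrow> real) \<Rightarrow> (nat \<Rightarrow> real) \<Rightarrow> bool" where
  "const_on_components K \<omega> f \<longleftrightarrow>
     (\<forall>i<K. \<forall>j<K. (omega_edge K \<omega>)\<^sup>*\<^sup>* i j \<longrightarrow> f i = f j)"

end

theory Submission
  imports Defs
begin

text \<open>Write \<open>F d = (tanh (d/2) - 1)\<^sup>2 = 4 / (1 + exp d)\<^sup>2\<close> and \<open>p = P\<^sub>\<sigma>\<close>. Exchanging the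
  order of summation turns the loss into \<open>\<Sum>\<^sub>i\<^sub>,\<^sub>j p\<^sub>i \<omega>\<^sub>i\<^sub>j F(g\<^sub>i - g\<^sub>j)\<close>. Since \<open>\<omega>\<close> is symmetric, the
  terms \<open>(i,j)\<close> and \<open>(j,i)\<close> combine to \<open>\<omega>\<^sub>i\<^sub>j (p\<^sub>i F d + p\<^sub>j F (-d))\<close> with \<open>d = g\<^sub>i - g\<^sub>j\<close>, and
  completing the square gives
  \<open>p\<^sub>i F d + p\<^sub>j F (-d) = 4 p\<^sub>i p\<^sub>j / (p\<^sub>i + p\<^sub>j) + 4 (p\<^sub>i - p\<^sub>j e\<^sup>d)\<^sup>2 / ((p\<^sub>i + p\<^sub>j) (1 + e\<^sup>d)\<^sup>2)\<close>.
  So twice the loss is a constant plus a sum of nonnegative excess terms, all of which vanish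
  for \<open>g = log p\<close>. Hence \<open>g\<close> is a minimiser iff every excess term with \<open>\<omega>\<^sub>i\<^sub>j > 0\<close> vanishes,
  i.e. iff \<open>g\<^sub>i - log p\<^sub>i = g\<^sub>j - log p\<^sub>j\<close> along every edge of the graph.\<close>

lemma tanh_half_minus_one_squared: "(tanh (x / 2) - 1)\<^sup>2 = 4 / (1 + exp x)\<^sup>2"
  for x :: real
proof -
  have pos: "1 + exp x > 0"
    by (simp add: add_pos_pos)
  have "tanh (x / 2) = (exp x - 1) / (exp x + 1)"
    using pos by (simp add: tanh_real_altdef exp_minus divide_simps)
  also have "\<dots> = 1 - 2 / (1 + exp x)"
    using pos by (simp add: field_simps)
  finally show ?thesis
    by (simp add: power2_eq_square)
qed

definition pair_excess :: "real \<Rightarrow> real \<Rightarrow> real \<Rightarrow> real" where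
  "pair_excess a b d = 4 * (a - b * exp d)\<^sup>2 / ((a + b) * (1 + exp d)\<^sup>2)"

lemma pair_tanh_loss_decompose:
  fixes a b d :: real
  assumes "a > 0" "b > 0"
  shows "a * (tanh (d / 2) - 1)\<^sup>2 + b * (tanh (- d / 2) - 1)\<^sup>2
           = 4 * a * b / (a + b) + pair_excess a b d"
proof -
  define u where "u = exp d"
  have "u > 0"
    unfolding u_def by simp
  have "(tanh (- d / 2) - 1)\<^sup>2 = 4 / (1 + 1 / u)\<^sup>2"
    using tanh_half_minus_one_squared[of "- d"] by (simp add: u_def exp_minus field_simps)
  also have "\<dots> = 4 * u\<^sup>2 / (1 + u)\<^sup>2"
    using \<open>u > 0\<close> by (simp add: field_simps)
  finally have "a * (tanh (d / 2) - 1)\<^sup>2 + b * (tanh (- d / 2) - 1)\<^sup>2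
      = 4 * (a + b * u\<^sup>2) / (1 + u)\<^sup>2"
    using tanh_half_minus_one_squared[of d] by (simp add: u_def add_divide_distrib algebra_simps)
  also have "\<dots> = 4 * a * b / (a + b) + 4 * (a - b * u)\<^sup>2 / ((a + b) * (1 + u)\<^sup>2)"
    using \<open>u > 0\<close> assms by (simp add: divide_simps) (simp add: power2_eq_square algebra_simps)
  finally show ?thesis
    unfolding pair_excess_def u_def .
qed

lemma pair_excess_nonneg: "a + b \<ge> 0 \<Longrightarrow> pair_excess a b d \<ge> 0"
  unfolding pair_excess_def by (simp add: add_pos_pos)

lemma pair_excess_eq_0_iff:
  assumes "a > 0" "b > 0"
  shows "pair_excess a b d = 0 \<longleftrightarrow> d = ln a - ln b"
proof -
  have "1 + exp d > 0"
    by (simp add: add_pos_pos)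
  then have "pair_excess a b d = 0 \<longleftrightarrow> a = b * exp d"
    unfolding pair_excess_def using assms by simp
  also have "\<dots> \<longleftrightarrow> ln a = ln (b * exp d)"
    using assms by simp
  also have "\<dots> \<longleftrightarrow> d = ln a - ln b"
    using assms by (auto simp: ln_mult)
  finally show ?thesis .
qed

lemma double_sum_nonneg_eq_0_iff:
  fixes X :: "'a \<Rightarrow> 'b \<Rightarrow> 'c :: ordered_comm_monoid_add"
  assumes "finite A" "finite B" "\<And>i j. i \<in> A \<Longrightarrow> j \<in> B \<Longrightarrow> X i j \<ge> 0"
  shows "(\<Sum>i\<in>A. \<Sum>j\<in>B. X i j) = 0 \<longleftrightarrow> (\<forall>i\<in>A. \<forall>j\<in>B. X i j = 0)"
  using assms by (simp add: sum_nonneg_eq_0_iff sum_nonneg)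

definition pair_tanh_loss ::
  "nat \<Rightarrow> (nat \<Rightarrow> real) \<Rightarrow> (nat \<Rightarrow> nat \<Rightarrow> real) \<Rightarrow> (nat \<Rightarrow> real) \<Rightarrow> real" where
  "pair_tanh_loss K p \<omega> h = (\<Sum>i<K. \<Sum>j<K. p i * \<omega> i j * (tanh ((h i - h j) / 2) - 1)\<^sup>2)"

lemma denoise_loss_eq_pair_tanh_loss:
  "denoise_loss K P q \<omega> g = pair_tanh_loss K (corrupted_marginal K P q) \<omega> g"
proof -
  define loss_at where "loss_at zs = (\<Sum>zt<K. \<omega> zs zt * (tanh ((g zs - g zt) / 2) - 1)\<^sup>2)" for zs
  have "denoise_loss K P q \<omega> g = (\<Sum>z0<K. \<Sum>zs<K. P z0 * q z0 zs * loss_at zs)"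
    unfolding denoise_loss_def loss_at_def by (simp add: sum_distrib_left mult.assoc)
  also have "\<dots> = (\<Sum>zs<K. \<Sum>z0<K. P z0 * q z0 zs * loss_at zs)"
    by (rule sum.swap)
  also have "\<dots> = (\<Sum>zs<K. corrupted_marginal K P q zs * loss_at zs)"
    unfolding corrupted_marginal_def by (simp add: sum_distrib_right)
  also have "\<dots> = pair_tanh_loss K (corrupted_marginal K P q) \<omega> g"
    unfolding pair_tanh_loss_def loss_at_def by (simp add: sum_distrib_left mult.assoc)
  finally show ?thesis .
qed

lemma pair_tanh_loss_split:
  fixes K :: nat and p :: "nat \<Rightarrow> real" and \<omega> :: "nat \<Rightarrow> nat \<Rightarrow> real" and h :: "nat \<Rightarrow> real"
  assumes p_pos: "\<And>i. i < K \<Longrightarrow> p i > 0"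
    and \<omega>_sym: "\<And>i j. i < K \<Longrightarrow> j < K \<Longrightarrow> \<omega> i j = \<omega> j i"
  shows "2 * pair_tanh_loss K p \<omega> h =
           (\<Sum>i<K. \<Sum>j<K. \<omega> i j * (4 * p i * p j / (p i + p j)))
         + (\<Sum>i<K. \<Sum>j<K. \<omega> i j * pair_excess (p i) (p j) (h i - h j))"
proof -
  define X where "X i j = p i * \<omega> i j * (tanh ((h i - h j) / 2) - 1)\<^sup>2" for i j
  have pair: "X i j + X j i = \<omega> i j * (4 * p i * p j / (p i + p j))
                             + \<omega> i j * pair_excess (p i) (p j) (h i - h j)"
    if "i < K" "j < K" for i j
  proof -
    have "X i j + X j i = \<omega> i j * (p i * (tanh ((h i - h j) / 2) - 1)\<^sup>2
                                 + p j * (tanh (- (h i - h j) / 2) - 1)\<^sup>2)"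
      unfolding X_def using \<omega>_sym[OF that] by (simp add: algebra_simps)
    also have "\<dots> = \<omega> i j * (4 * p i * p j / (p i + p j) + pair_excess (p i) (p j) (h i - h j))"
      by (simp only: pair_tanh_loss_decompose p_pos that)
    finally show ?thesis
      by (simp only: distrib_left)
  qed
  have "2 * pair_tanh_loss K p \<omega> h = (\<Sum>i<K. \<Sum>j<K. X i j) + (\<Sum>i<K. \<Sum>j<K. X j i)"
    unfolding pair_tanh_loss_def X_def using sum.swap by simp
  also have "\<dots> = (\<Sum>i<K. \<Sum>j<K. X i j + X j i)"
    by (simp only: sum.distrib)
  finally show ?thesis
    by (simp add: pair sum.distrib)
qed

lemma pair_tanh_loss_minimal_iff:
  assumes p_pos: "\<And>i. i < K \<Longrightarrow> p i > 0"
    and \<omega>_sym: "\<And>i j. i < K \<Longrightarrow> j < K \<Longrightarrow> \<omega> i j = \<omega> j i"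
    and \<omega>_nonneg: "\<And>i j. i < K \<Longrightarrow> j < K \<Longrightarrow> \<omega> i j \<ge> 0"
  shows "(\<forall>h. pair_tanh_loss K p \<omega> g \<le> pair_tanh_loss K p \<omega> h) \<longleftrightarrow>
           (\<forall>i<K. \<forall>j<K. \<omega> i j > 0 \<longrightarrow> g i - ln (p i) = g j - ln (p j))"
proof -
  define E where "E h i j = \<omega> i j * pair_excess (p i) (p j) (h i - h j)" for h i j
  define S where "S h = (\<Sum>i<K. \<Sum>j<K. E h i j)" for h
  have E_nonneg: "E h i j \<ge> 0" if "i < K" "j < K" for h i j
  proof -
    have "p i + p j \<ge> 0"
      using p_pos[OF that(1)] p_pos[OF that(2)] by simp
    then show ?thesis
      unfolding E_def by (intro mult_nonneg_nonneg \<omega>_nonneg[OF that] pair_excess_nonneg)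
  qed
  have E_eq_0_iff: "E h i j = 0 \<longleftrightarrow> (\<omega> i j > 0 \<longrightarrow> h i - ln (p i) = h j - ln (p j))"
    if "i < K" "j < K" for h i j
  proof (cases "\<omega> i j > 0")
    case True
    then have "E h i j = 0 \<longleftrightarrow> pair_excess (p i) (p j) (h i - h j) = 0"
      by (simp add: E_def)
    also have "\<dots> \<longleftrightarrow> h i - h j = ln (p i) - ln (p j)"
      by (rule pair_excess_eq_0_iff[OF p_pos p_pos, OF that])
    finally show ?thesis
      using True by arith
  next
    case False
    then have "\<omega> i j = 0"
      using \<omega>_nonneg[OF that] by simp
    then show ?thesis
      by (simp add: E_def)
  qed
  have S_nonneg: "S h \<ge> 0" for h
    unfolding S_def by (intro sum_nonneg E_nonneg) simp_all
  have S_eq_0_iff: "S h = 0 \<longleftrightarrow> (\<forall>i<K. \<forall>j<K. \<omega> i j > 0 \<longrightarrow> h i - ln (p i) = h j - ln (p j))"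
    for h
  proof -
    have "S h = 0 \<longleftrightarrow> (\<forall>i\<in>{..<K}. \<forall>j\<in>{..<K}. E h i j = 0)"
      unfolding S_def by (rule double_sum_nonneg_eq_0_iff) (simp_all add: E_nonneg)
    then show ?thesis
      by (auto simp: E_eq_0_iff)
  qed
  have loss_le_iff: "pair_tanh_loss K p \<omega> g \<le> pair_tanh_loss K p \<omega> h \<longleftrightarrow> S g \<le> S h" for h
    using pair_tanh_loss_split[of K p \<omega> h, OF p_pos \<omega>_sym] pair_tanh_loss_split[of K p \<omega> g, OF p_pos \<omega>_sym]
    unfolding S_def E_def by linarith
  have "S (\<lambda>i. ln (p i)) = 0"
    by (simp add: S_eq_0_iff)
  have "(\<forall>h. pair_tanh_loss K p \<omega> g \<le> pair_tanh_loss K p \<omega> h) \<longleftrightarrow> S g = 0"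
  proof
    assume "\<forall>h. pair_tanh_loss K p \<omega> g \<le> pair_tanh_loss K p \<omega> h"
    then have "S g \<le> S (\<lambda>i. ln (p i))"
      using loss_le_iff by blast
    then show "S g = 0"
      using S_nonneg[of g] \<open>S (\<lambda>i. ln (p i)) = 0\<close> by linarith
  next
    assume "S g = 0"
    then show "\<forall>h. pair_tanh_loss K p \<omega> g \<le> pair_tanh_loss K p \<omega> h"
      using loss_le_iff S_nonneg by simp
  qed
  then show ?thesis
    by (simp add: S_eq_0_iff)
qed

lemma const_on_components_iff:
  "const_on_components K \<omega> f \<longleftrightarrow> (\<forall>i<K. \<forall>j<K. \<omega> i j > 0 \<longrightarrow> f i = f j)"
proof
  assume const: "const_on_components K \<omega> f"
  show "\<forall>i<K. \<forall>j<K. \<omega> i j > 0 \<longrightarrow> f i = f j"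
  proof (intro allI impI)
    fix i j
    assume "i < K" "j < K" "\<omega> i j > 0"
    then have "i = j \<or> omega_edge K \<omega> i j"
      unfolding omega_edge_def by blast
    then show "f i = f j"
      using const \<open>i < K\<close> \<open>j < K\<close> unfolding const_on_components_def by blast
  qed
next
  assume edge: "\<forall>i<K. \<forall>j<K. \<omega> i j > 0 \<longrightarrow> f i = f j"
  have "f i = f j" if "(omega_edge K \<omega>)\<^sup>*\<^sup>* i j" for i j
    using that
  proof induction
    case (step j k)
    then show ?case
      using edge unfolding omega_edge_def by auto
  qed simp
  then show "const_on_components K \<omega> f"
    unfolding const_on_components_def by blast
qed

theorem mainTheorem8:
  fixes K :: nat and P :: "nat \<Rightarrow> real" and q \<omega> :: "nat \<Rightarrow> nat \<Rightarrow> real"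
    and g :: "nat \<Rightarrow> real"
  assumes P_nonneg: "\<forall>i<K. P i \<ge> 0"
    and P_sum: "(\<Sum>i<K. P i) = 1"
    and q_nonneg: "\<forall>i<K. \<forall>j<K. q i j \<ge> 0"
    and q_sum: "\<forall>i<K. (\<Sum>j<K. q i j) = 1"
    and P\<sigma>_pos: "\<forall>i<K. corrupted_marginal K P q i > 0"
    and \<omega>_sym: "\<forall>i<K. \<forall>j<K. \<omega> i j = \<omega> j i"
    and \<omega>_nonneg: "\<forall>i<K. \<forall>j<K. \<omega> i j \<ge> 0"
    and \<omega>_sum: "\<forall>i<K. (\<Sum>j<K. \<omega> i j) = 1"
  shows "denoise_loss K P q \<omega> g =
           (\<Sum>i<K. \<Sum>j<K. corrupted_marginal K P q i * \<omega> i j * (tanh ((g i - g j) / 2) - 1)\<^sup>2)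
         \<and> ((\<forall>h :: nat \<Rightarrow> real. denoise_loss K P q \<omega> g \<le> denoise_loss K P q \<omega> h)
            \<longleftrightarrow> const_on_components K \<omega> (\<lambda>i. g i - ln (corrupted_marginal K P q i)))"
proof -
  let ?p = "corrupted_marginal K P q"
  have "(\<forall>h. pair_tanh_loss K ?p \<omega> g \<le> pair_tanh_loss K ?p \<omega> h) \<longleftrightarrow>
          (\<forall>i<K. \<forall>j<K. \<omega> i j > 0 \<longrightarrow> g i - ln (?p i) = g j - ln (?p j))"
    by (rule pair_tanh_loss_minimal_iff) (simp_all add: P\<sigma>_pos \<omega>_sym \<omega>_nonneg)
  then show ?thesis
    by (simp add: denoise_loss_eq_pair_tanh_loss const_on_components_iff pair_tanh_loss_def)
qed

end
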